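(* Let $(\Omega(\mathcal A),\wedge,[\cdot,\cdot],\mathbf d)$ be a differential Gerstenhaber superalgebra, and let $(\Omega^1(\mathcal A),\llbracket\cdot,\cdot\rrbracket,\rho)$ be the associated Lie superalgebroid, $\llbracket\alpha,\beta\rrbracket=[\alpha,\beta]$, $\rho(\alpha)=[\alpha,\cdot]|_{\mathcal A}$. Then $\rho$ is skew-supersymmetric, $\llbracket\mathbf d f,\mathbf d g\rrbracket=\mathbf d(\rho(\mathbf d f)(g))$ for all $f,g\in\mathcal A$, and consequently the bracket has the form $$\llbracket\alpha,\beta\rrbracket=\rho(\alpha)\lrcorner\mathbf d\beta-(-1)^{p(\alpha)p(\beta)}\rho(\beta)\lrcorner\mathbf d\alpha+\mathbf d\big(\beta(\rho(\alpha))\big),$$ and the superalgebroid is of Poisson type.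
   Context: $\mathcal A$ is a $\mathbb Z$-graded, associative, graded-commutative unital real algebra, regarded as supercommutative with parity $p$ = degree mod 2. $\operatorname{Der}(\mathcal A)$: graded derivations. $\Omega^1(\mathcal A)=\ker(\mathbf m:\mathcal A\otimes\mathcal A\to\mathcal A)$ with $\mathbf d a=a\otimes1-1\otimes a$, generated over $\mathcal A$ by $\mathbf d\mathcal A$, paired with $\operatorname{Der}(\mathcal A)$ via $\langle D,\mathbf d a\rangle=D(a)$, written $\alpha(D)$; $\Omega(\mathcal A)$ is the algebra of superforms generated over $\mathcal A$ by $\Omega^1(\mathcal A)$, bigraded by form degree $\deg$ and parity $p$, with exterior superderivative $\mathbf d$ ($\mathbf d^2=0$) and interior product $D\lrcorner$. A Gerstenhaber superbracket on $\Omega(\mathcal A)$ satisfies, for bihomogeneous elements, $[\alpha,\beta]=-(-1)^{(\deg\alpha-1)(\deg\beta-1)+p(\alpha)p(\beta)}[\beta,\alpha]$, $[\alpha,[\beta,\gamma]]=[[\alpha,\beta],\gamma]+(-1)^{(\deg\alpha-1)(\deg\beta-1)+p(\alpha)p(\beta)}[\beta,[\alpha,\gamma]]$, $[\alpha,\beta\wedge\gamma]=[\alpha,\beta]\wedge\gamma+(-1)^{(\deg\alpha-1)\deg\beta+p(\alpha)p(\beta)}\beta\wedge[\alpha,\gamma]$, and has form degree $-1$; it is differential if $\mathbf d[\alpha,\beta]=[\mathbf d\alpha,\beta]+(-1)^{\deg\alpha-1}[\alpha,\mathbf d\beta]$. A Lie superalgebroid on $\Omega^1(\mathcal A)$ is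 an even $\mathcal A$-linear anchor $\rho:\Omega^1(\mathcal A)\to\operatorname{Der}(\mathcal A)$ with a bilinear bracket making $\Omega^1(\mathcal A)$ a Lie superalgebra and satisfying $\llbracket\alpha,f\beta\rrbracket=\rho(\alpha)(f)\beta+(-1)^{p(\alpha)p(f)}f\llbracket\alpha,\beta\rrbracket$. The anchor is skew-supersymmetric if $\alpha(\rho(\beta))=-(-1)^{p(\alpha)p(\beta)}\beta(\rho(\alpha))$. A Lie superalgebroid is of Poisson type if its anchor is skew-supersymmetric and $\{f,g\}:=\rho(\mathbf d f)(g)$ satisfies $\{f,\{g,h\}\}=\{\{f,g\},h\}+(-1)^{p(f)p(g)}\{g,\{f,h\}\}$ (equivalently $[\rho(\mathbf d f),\rho(\mathbf d g)]=\rho(\mathbf d\{f,g\})$). *)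

theory Defs
  imports Complex_Main
begin

definition msgn :: "int \<Rightarrow> real" where
  "msgn e = (if even e then 1 else -1)"

text \<open>Parity as an integer (False = even = 0, True = odd = 1).\<close>
definition pint :: "bool \<Rightarrow> int" where
  "pint b = (if b then 1 else 0)"

text \<open>A bigrading of the superform algebra: B k b is the space of superforms of
  form degree k and parity b.\<close>
type_synonym 'w bigrading = "nat \<Rightarrow> bool \<Rightarrow> 'w set"

definition Alg :: "'w::real_vector bigrading \<Rightarrow> 'w set" where
  "Alg B = {x + y | x y. x \<in> B 0 False \<and> y \<in> B 0 True}"

definition Om1 :: "'w::real_vector bigrading \<Rightarrow> 'w set" where
  "Om1 B = {x + y | x y. x \<in> B 1 False \<and> y \<in> B 1 True}"

definition bigraded_space :: "'w::real_vector bigrading \<Rightarrow> bool" where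
  "bigraded_space B \<longleftrightarrow>
     (\<forall>k b. subspace (B k b)) \<and>
     (\<forall>w. \<exists>!c :: nat \<times> bool \<Rightarrow> 'w.
        finite {p. c p \<noteq> 0} \<and> (\<forall>k b. c (k, b) \<in> B k b) \<and>
        w = (\<Sum>p\<in>{p. c p \<noteq> 0}. c p))"

definition sf_wedge :: "'w::real_vector bigrading \<Rightarrow> ('w \<Rightarrow> 'w \<Rightarrow> 'w) \<Rightarrow> 'w \<Rightarrow> bool" where
  "sf_wedge B wed one \<longleftrightarrow>
     (\<forall>x y z. wed (x + y) z = wed x z + wed y z) \<and>
     (\<forall>x y z. wed x (y + z) = wed x y + wed x z) \<and>
     (\<forall>r x y. wed (r *\<^sub>R x) y = r *\<^sub>R wed x y) \<and>
     (\<forall>r x y. wed x (r *\<^sub>R y) = r *\<^sub>R wed x y) \<and>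
     (\<forall>x y z. wed (wed x y) z = wed x (wed y z)) \<and>
     one \<in> B 0 False \<and> (\<forall>x. wed one x = x \<and> wed x one = x) \<and>
     (\<forall>k a l b x y. x \<in> B k a \<longrightarrow> y \<in> B l b \<longrightarrow>
        wed x y \<in> B (k + l) (a \<noteq> b) \<and>
        wed x y = msgn (int k * int l + pint a * pint b) *\<^sub>R wed y x)"

definition sf_diff :: "'w::real_vector bigrading \<Rightarrow> ('w \<Rightarrow> 'w \<Rightarrow> 'w) \<Rightarrow> ('w \<Rightarrow> 'w) \<Rightarrow> bool" where
  "sf_diff B wed dd \<longleftrightarrow>
     (\<forall>x y. dd (x + y) = dd x + dd y) \<and> (\<forall>r x. dd (r *\<^sub>R x) = r *\<^sub>R dd x) \<and>
     (\<forall>k a x. x \<in> B k a \<longrightarrow> dd x \<in> B (Suc k) a) \<and>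
     (\<forall>x. dd (dd x) = 0) \<and>
     (\<forall>k a x y. x \<in> B k a \<longrightarrow>
        dd (wed x y) = wed (dd x) y + msgn (int k) *\<^sub>R wed x (dd y))"

definition sf_generated :: "'w::real_vector bigrading \<Rightarrow> ('w \<Rightarrow> 'w \<Rightarrow> 'w) \<Rightarrow> 'w \<Rightarrow> ('w \<Rightarrow> 'w) \<Rightarrow> bool" where
  "sf_generated B wed one dd \<longleftrightarrow>
     (\<forall>\<alpha>\<in>Om1 B. \<exists>fs gs. length fs = length gs \<and> set fs \<subseteq> Alg B \<and> set gs \<subseteq> Alg B \<and>
        \<alpha> = (\<Sum>i<length fs. wed (fs ! i) (dd (gs ! i)))) \<and>
     (\<forall>w. w \<in> span {wed f (foldr wed \<alpha>s one) | f \<alpha>s. f \<in> Alg B \<and> set \<alpha>s \<subseteq> Om1 B})"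

definition superder :: "'w::real_vector bigrading \<Rightarrow> ('w \<Rightarrow> 'w \<Rightarrow> 'w) \<Rightarrow> bool \<Rightarrow> ('w \<Rightarrow> 'w) \<Rightarrow> bool" where
  "superder B wed q D \<longleftrightarrow>
     (\<forall>f\<in>Alg B. \<forall>g\<in>Alg B. D (f + g) = D f + D g) \<and>
     (\<forall>r. \<forall>f\<in>Alg B. D (r *\<^sub>R f) = r *\<^sub>R D f) \<and>
     (\<forall>b f. f \<in> B 0 b \<longrightarrow> D f \<in> B 0 (b \<noteq> q)) \<and>
     (\<forall>a f g. f \<in> B 0 a \<longrightarrow> g \<in> Alg B \<longrightarrow>
        D (wed f g) = wed (D f) g + msgn (pint q * pint a) *\<^sub>R wed f (D g))"

definition sf_interior :: "'w::real_vector bigrading \<Rightarrow> ('w \<Rightarrow> 'w \<Rightarrow> 'w) \<Rightarrow> ('w \<Rightarrow> 'w)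
     \<Rightarrow> (('w \<Rightarrow> 'w) \<Rightarrow> 'w \<Rightarrow> 'w) \<Rightarrow> bool" where
  "sf_interior B wed dd ip \<longleftrightarrow>
     (\<forall>q D. superder B wed q D \<longrightarrow>
        (\<forall>x y. ip D (x + y) = ip D x + ip D y) \<and>
        (\<forall>r x. ip D (r *\<^sub>R x) = r *\<^sub>R ip D x) \<and>
        (\<forall>a x. x \<in> B 0 a \<longrightarrow> ip D x = 0) \<and>
        (\<forall>k a x. x \<in> B (Suc k) a \<longrightarrow> ip D x \<in> B k (a \<noteq> q)) \<and>
        (\<forall>f\<in>Alg B. ip D (dd f) = D f) \<and>
        (\<forall>k a x y. x \<in> B k a \<longrightarrow>
           ip D (wed x y) = wed (ip D x) y + msgn (int k + pint q * pint a) *\<^sub>R wed x (ip D y)))"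

definition superform_algebra :: "'w::real_vector bigrading \<Rightarrow> ('w \<Rightarrow> 'w \<Rightarrow> 'w) \<Rightarrow> 'w
     \<Rightarrow> ('w \<Rightarrow> 'w) \<Rightarrow> (('w \<Rightarrow> 'w) \<Rightarrow> 'w \<Rightarrow> 'w) \<Rightarrow> bool" where
  "superform_algebra B wed one dd ip \<longleftrightarrow>
     bigraded_space B \<and> sf_wedge B wed one \<and> sf_diff B wed dd \<and>
     sf_generated B wed one dd \<and> sf_interior B wed dd ip"

definition gerstenhaber :: "'w::real_vector bigrading \<Rightarrow> ('w \<Rightarrow> 'w \<Rightarrow> 'w) \<Rightarrow> ('w \<Rightarrow> 'w \<Rightarrow> 'w) \<Rightarrow> bool" where
  "gerstenhaber B wed gb \<longleftrightarrow>
     (\<forall>x y z. gb (x + y) z = gb x z + gb y z) \<and>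
     (\<forall>x y z. gb x (y + z) = gb x y + gb x z) \<and>
     (\<forall>r x y. gb (r *\<^sub>R x) y = r *\<^sub>R gb x y) \<and>
     (\<forall>r x y. gb x (r *\<^sub>R y) = r *\<^sub>R gb x y) \<and>
     (\<forall>k a l b x y. x \<in> B k a \<longrightarrow> y \<in> B l b \<longrightarrow>
        (if k + l = 0 then gb x y = 0 else gb x y \<in> B (k + l - 1) (a \<noteq> b)) \<and>
        gb x y = - (msgn ((int k - 1) * (int l - 1) + pint a * pint b) *\<^sub>R gb y x) \<and>
        (\<forall>m c z. z \<in> B m c \<longrightarrow>
           gb x (gb y z) = gb (gb x y) z
             + msgn ((int k - 1) * (int l - 1) + pint a * pint b) *\<^sub>R gb y (gb x z)) \<and>
        (\<forall>z. gb x (wed y z) = wed (gb x y) z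
             + msgn ((int k - 1) * int l + pint a * pint b) *\<^sub>R wed y (gb x z)))"

definition differential_bracket :: "'w::real_vector bigrading \<Rightarrow> ('w \<Rightarrow> 'w) \<Rightarrow> ('w \<Rightarrow> 'w \<Rightarrow> 'w) \<Rightarrow> bool" where
  "differential_bracket B dd gb \<longleftrightarrow>
     (\<forall>k a x y. x \<in> B k a \<longrightarrow> dd (gb x y) = gb (dd x) y + msgn (int k - 1) *\<^sub>R gb x (dd y))"

text \<open>The anchor associated with the bracket: rho(alpha) = [alpha, _] (used on A only).\<close>
definition anchor :: "('w \<Rightarrow> 'w \<Rightarrow> 'w) \<Rightarrow> 'w \<Rightarrow> ('w \<Rightarrow> 'w)" where
  "anchor gb \<alpha> = (\<lambda>f. gb \<alpha> f)"

definition lie_superalgebroid :: "'w::real_vector bigrading \<Rightarrow> ('w \<Rightarrow> 'w \<Rightarrow> 'w)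
     \<Rightarrow> ('w \<Rightarrow> 'w \<Rightarrow> 'w) \<Rightarrow> ('w \<Rightarrow> 'w \<Rightarrow> 'w) \<Rightarrow> bool" where
  "lie_superalgebroid B wed rho br \<longleftrightarrow>
     (\<forall>\<alpha>\<in>Om1 B. \<forall>\<beta>\<in>Om1 B. br \<alpha> \<beta> \<in> Om1 B) \<and>
     (\<forall>\<alpha>\<in>Om1 B. \<forall>\<alpha>'\<in>Om1 B. \<forall>\<beta>\<in>Om1 B.
        br (\<alpha> + \<alpha>') \<beta> = br \<alpha> \<beta> + br \<alpha>' \<beta> \<and> br \<beta> (\<alpha> + \<alpha>') = br \<beta> \<alpha> + br \<beta> \<alpha>') \<and>
     (\<forall>r. \<forall>\<alpha>\<in>Om1 B. \<forall>\<beta>\<in>Om1 B.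
        br (r *\<^sub>R \<alpha>) \<beta> = r *\<^sub>R br \<alpha> \<beta> \<and> br \<beta> (r *\<^sub>R \<alpha>) = r *\<^sub>R br \<beta> \<alpha>) \<and>
     (\<forall>a b \<alpha> \<beta>. \<alpha> \<in> B 1 a \<longrightarrow> \<beta> \<in> B 1 b \<longrightarrow>
        br \<alpha> \<beta> \<in> B 1 (a \<noteq> b) \<and>
        br \<alpha> \<beta> = - (msgn (pint a * pint b) *\<^sub>R br \<beta> \<alpha>) \<and>
        (\<forall>c \<gamma>. \<gamma> \<in> B 1 c \<longrightarrow>
           br \<alpha> (br \<beta> \<gamma>) = br (br \<alpha> \<beta>) \<gamma> + msgn (pint a * pint b) *\<^sub>R br \<beta> (br \<alpha> \<gamma>))) \<and>
     (\<forall>a \<alpha>. \<alpha> \<in> B 1 a \<longrightarrow> superder B wed a (rho \<alpha>)) \<and>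
     (\<forall>\<alpha>\<in>Om1 B. \<forall>\<beta>\<in>Om1 B. \<forall>f\<in>Alg B. rho (\<alpha> + \<beta>) f = rho \<alpha> f + rho \<beta> f) \<and>
     (\<forall>r. \<forall>\<alpha>\<in>Om1 B. \<forall>f\<in>Alg B. rho (r *\<^sub>R \<alpha>) f = r *\<^sub>R rho \<alpha> f) \<and>
     (\<forall>f\<in>Alg B. \<forall>\<alpha>\<in>Om1 B. \<forall>g\<in>Alg B. rho (wed f \<alpha>) g = wed f (rho \<alpha> g)) \<and>
     (\<forall>a c \<alpha> f \<beta>. \<alpha> \<in> B 1 a \<longrightarrow> f \<in> B 0 c \<longrightarrow> \<beta> \<in> Om1 B \<longrightarrow>
        br \<alpha> (wed f \<beta>) = wed (rho \<alpha> f) \<beta> + msgn (pint a * pint c) *\<^sub>R wed f (br \<alpha> \<beta>))"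

text \<open>Skew-supersymmetric anchor: alpha(rho beta) = -(-1)^(p p) beta(rho alpha),
  the pairing being alpha(D) = D \<lrcorner> alpha.\<close>
definition skew_anchor :: "'w::real_vector bigrading \<Rightarrow> (('w \<Rightarrow> 'w) \<Rightarrow> 'w \<Rightarrow> 'w)
     \<Rightarrow> ('w \<Rightarrow> 'w \<Rightarrow> 'w) \<Rightarrow> bool" where
  "skew_anchor B ip rho \<longleftrightarrow>
     (\<forall>a b \<alpha> \<beta>. \<alpha> \<in> B 1 a \<longrightarrow> \<beta> \<in> B 1 b \<longrightarrow>
        ip (rho \<beta>) \<alpha> = - (msgn (pint a * pint b) *\<^sub>R ip (rho \<alpha>) \<beta>))"

definition poisson_type :: "'w::real_vector bigrading \<Rightarrow> ('w \<Rightarrow> 'w \<Rightarrow> 'w) \<Rightarrow> ('w \<Rightarrow> 'w)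
     \<Rightarrow> (('w \<Rightarrow> 'w) \<Rightarrow> 'w \<Rightarrow> 'w) \<Rightarrow> ('w \<Rightarrow> 'w \<Rightarrow> 'w) \<Rightarrow> ('w \<Rightarrow> 'w \<Rightarrow> 'w) \<Rightarrow> bool" where
  "poisson_type B wed dd ip rho br \<longleftrightarrow>
     lie_superalgebroid B wed rho br \<and> skew_anchor B ip rho \<and>
     (\<forall>a b c f g h. f \<in> B 0 a \<longrightarrow> g \<in> B 0 b \<longrightarrow> h \<in> B 0 c \<longrightarrow>
        rho (dd f) (rho (dd g) h) = rho (dd (rho (dd f) g)) h
          + msgn (pint a * pint b) *\<^sub>R rho (dd g) (rho (dd f) h))"

end

theory Submission
  imports Defs
begin

text \<open>Every 1-form of parity a is a finite sum of generators f dg with f, g homogeneous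
  functions of total parity a (generation plus uniqueness of the bigraded decomposition).
  On 1-forms and their differentials the interior product by a superderivation depends only
  on, and additively on, the values of the derivation on functions, so it splits along such
  sums in both arguments of the anchor. Skew-supersymmetry of the anchor and the formula for
  the bracket thus reduce to pairs of generators f dg, h dk, where they follow from the
  Leibniz rule, [f\<alpha>, g] = f[\<alpha>, g] and [df, g] = [f, dg]; the latter is the differential
  property applied to [f, g] = 0. The same property gives [df, dg] = d[df, g], which turns
  the Jacobi identity for df, dg, h into that of the Poisson bracket.\<close>

lemma pint_simps [simp]: "pint True = 1" "pint False = 0"
  by (simp_all add: pint_def)

lemma msgn_simps [simp]: "msgn 0 = 1" "msgn 1 = -1" "msgn (-1) = -1" "msgn 2 = 1" "msgn 3 = -1"
  by (simp_all add: msgn_def)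

lemma anchor_eq: "anchor b = b"
  by (simp add: anchor_def fun_eq_iff)

locale differential_gerstenhaber =
  fixes B :: "nat \<Rightarrow> bool \<Rightarrow> 'w::real_vector set"
    and wed gb :: "'w \<Rightarrow> 'w \<Rightarrow> 'w" and one :: 'w and dd :: "'w \<Rightarrow> 'w"
    and ip :: "('w \<Rightarrow> 'w) \<Rightarrow> 'w \<Rightarrow> 'w"
  assumes superforms: "superform_algebra B wed one dd ip"
    and gerstenhaber: "gerstenhaber B wed gb"
    and differential: "differential_bracket B dd gb"
begin

lemma subspace_B: "subspace (B k b)"
  using superforms by (simp add: superform_algebra_def bigraded_space_def)

lemma zero_in_B [simp]: "0 \<in> B k b"
  and add_in_B: "x \<in> B k b \<Longrightarrow> y \<in> B k b \<Longrightarrow> x + y \<in> B k b"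
  and diff_in_B: "x \<in> B k b \<Longrightarrow> y \<in> B k b \<Longrightarrow> x - y \<in> B k b"
  using subspace_B subspace_0 subspace_add subspace_diff by blast+

lemma bihomogeneous_eq_0:
  assumes "x \<in> B k b" and "x \<in> B l c" and "(k, b) \<noteq> (l, c)"
  shows "x = 0"
proof (rule ccontr)
  assume "x \<noteq> 0"
  define single where "single p = (\<lambda>q. if q = p then x else 0)" for p :: "nat \<times> bool"
  have support: "{q. single p q \<noteq> 0} = {p}" for p
    using \<open>x \<noteq> 0\<close> by (auto simp: single_def)
  have decomposition: "finite {q. single p q \<noteq> 0} \<and> (\<forall>m d. single p (m, d) \<in> B m d)
      \<and> x = (\<Sum>q\<in>{q. single p q \<noteq> 0}. single p q)" if "x \<in> B (fst p) (snd p)" for p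
    using that by (auto simp: support single_def)
  have "\<exists>!c :: nat \<times> bool \<Rightarrow> 'w. finite {p. c p \<noteq> 0} \<and> (\<forall>k b. c (k, b) \<in> B k b)
      \<and> x = (\<Sum>p\<in>{p. c p \<noteq> 0}. c p)"
    using superforms by (simp add: superform_algebra_def bigraded_space_def)
  then have "single (k, b) = single (l, c)"
    using decomposition[of "(k, b)"] decomposition[of "(l, c)"] assms(1,2) by auto
  then have "single (k, b) (k, b) = single (l, c) (k, b)"
    by simp
  then show False
    using \<open>x \<noteq> 0\<close> assms(3) by (auto simp: single_def split: if_splits)
qed

lemma Alg_decompose: "f \<in> Alg B \<Longrightarrow> \<exists>f0 f1. f0 \<in> B 0 False \<and> f1 \<in> B 0 True \<and> f = f0 + f1"
  unfolding Alg_def by blast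

lemma Om1_decompose: "\<alpha> \<in> Om1 B \<Longrightarrow> \<exists>\<alpha>0 \<alpha>1. \<alpha>0 \<in> B 1 False \<and> \<alpha>1 \<in> B 1 True \<and> \<alpha> = \<alpha>0 + \<alpha>1"
  unfolding Om1_def by blast

lemma function_in_Alg: "f \<in> B 0 c \<Longrightarrow> f \<in> Alg B"
  unfolding Alg_def by (cases c) force+

lemma one_form_in_Om1: "\<alpha> \<in> B 1 c \<Longrightarrow> \<alpha> \<in> Om1 B"
  unfolding Om1_def by (cases c) force+

lemma wed_add_left [simp]: "wed (x + y) z = wed x z + wed y z"
  and wed_add_right [simp]: "wed x (y + z) = wed x y + wed x z"
  and wed_scale_left [simp]: "wed (r *\<^sub>R x) y = r *\<^sub>R wed x y"
  and wed_scale_right [simp]: "wed x (r *\<^sub>R y) = r *\<^sub>R wed x y"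
  and wed_assoc: "wed (wed x y) z = wed x (wed y z)"
  using superforms by (simp_all add: superform_algebra_def sf_wedge_def)

lemma wed_in_B: "x \<in> B k a \<Longrightarrow> y \<in> B l b \<Longrightarrow> wed x y \<in> B (k + l) (a \<noteq> b)"
  and wed_commute: "x \<in> B k a \<Longrightarrow> y \<in> B l b \<Longrightarrow>
    wed x y = msgn (int k * int l + pint a * pint b) *\<^sub>R wed y x"
  using superforms unfolding superform_algebra_def sf_wedge_def by blast+

lemma linear_wed_left: "linear (\<lambda>x. wed x y)"
  and linear_wed_right: "linear (wed x)"
  by (rule linearI; simp)+

lemmas wed_linear_simps [simp] =
  linear_0[OF linear_wed_left] linear_neg[OF linear_wed_left] linear_diff[OF linear_wed_left]
  linear_0[OF linear_wed_right] linear_neg[OF linear_wed_right] linear_diff[OF linear_wed_right]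

lemma dd_add [simp]: "dd (x + y) = dd x + dd y"
  and dd_scale [simp]: "dd (r *\<^sub>R x) = r *\<^sub>R dd x"
  and dd_dd [simp]: "dd (dd x) = 0"
  using superforms by (simp_all add: superform_algebra_def sf_diff_def)

lemma dd_in_B: "x \<in> B k a \<Longrightarrow> dd x \<in> B (Suc k) a"
  and dd_wed: "x \<in> B k a \<Longrightarrow> dd (wed x y) = wed (dd x) y + msgn (int k) *\<^sub>R wed x (dd y)"
  using superforms by (simp_all add: superform_algebra_def sf_diff_def)

lemma dd_function_in_B: "f \<in> B 0 c \<Longrightarrow> dd f \<in> B 1 c"
  using dd_in_B[of f 0 c] by simp

lemma linear_dd: "linear dd"
  by (rule linearI) simp_all

lemmas dd_linear_simps [simp] = linear_0[OF linear_dd] linear_neg[OF linear_dd] linear_diff[OF linear_dd]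

lemma bracket_add_left [simp]: "gb (x + y) z = gb x z + gb y z"
  and bracket_add_right [simp]: "gb x (y + z) = gb x y + gb x z"
  and bracket_scale_left [simp]: "gb (r *\<^sub>R x) y = r *\<^sub>R gb x y"
  and bracket_scale_right [simp]: "gb x (r *\<^sub>R y) = r *\<^sub>R gb x y"
  using gerstenhaber by (simp_all add: gerstenhaber_def)

lemma linear_bracket_left: "linear (\<lambda>x. gb x y)"
  and linear_bracket_right: "linear (gb x)"
  by (rule linearI; simp)+

lemmas bracket_linear_simps [simp] =
  linear_0[OF linear_bracket_left] linear_neg[OF linear_bracket_left]
  linear_diff[OF linear_bracket_left] linear_0[OF linear_bracket_right]
  linear_neg[OF linear_bracket_right] linear_diff[OF linear_bracket_right]

lemma bracket_degree: "x \<in> B k a \<Longrightarrow> y \<in> B l b \<Longrightarrow>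
    (if k + l = 0 then gb x y = 0 else gb x y \<in> B (k + l - 1) (a \<noteq> b))"
  using gerstenhaber unfolding gerstenhaber_def by blast

lemma bracket_functions: "x \<in> B 0 a \<Longrightarrow> y \<in> B 0 b \<Longrightarrow> gb x y = 0"
  using bracket_degree[of x 0 a y 0 b] by simp

lemma bracket_in_B: "x \<in> B k a \<Longrightarrow> y \<in> B l b \<Longrightarrow> k + l \<noteq> 0 \<Longrightarrow> gb x y \<in> B (k + l - 1) (a \<noteq> b)"
  using bracket_degree[of x k a y l b] by argo

lemma bracket_skew: "x \<in> B k a \<Longrightarrow> y \<in> B l b \<Longrightarrow>
    gb x y = - (msgn ((int k - 1) * (int l - 1) + pint a * pint b) *\<^sub>R gb y x)"
  and bracket_jacobi: "x \<in> B k a \<Longrightarrow> y \<in> B l b \<Longrightarrow> z \<in> B m c \<Longrightarrow>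
    gb x (gb y z) = gb (gb x y) z
      + msgn ((int k - 1) * (int l - 1) + pint a * pint b) *\<^sub>R gb y (gb x z)"
  and bracket_wed_right: "x \<in> B k a \<Longrightarrow> y \<in> B l b \<Longrightarrow>
    gb x (wed y z) = wed (gb x y) z + msgn ((int k - 1) * int l + pint a * pint b) *\<^sub>R wed y (gb x z)"
  using gerstenhaber unfolding gerstenhaber_def by blast+

lemma dd_bracket: "x \<in> B k a \<Longrightarrow> dd (gb x y) = gb (dd x) y + msgn (int k - 1) *\<^sub>R gb x (dd y)"
  using differential unfolding differential_bracket_def by blast

context
  fixes q D assumes derivation: "superder B wed q D"
begin

lemma interior_add [simp]: "ip D (x + y) = ip D x + ip D y"
  and interior_scale [simp]: "ip D (r *\<^sub>R x) = r *\<^sub>R ip D x"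
  and interior_function: "x \<in> B 0 a \<Longrightarrow> ip D x = 0"
  and interior_dd_function: "f \<in> Alg B \<Longrightarrow> ip D (dd f) = D f"
  and interior_wed: "x \<in> B k a \<Longrightarrow>
    ip D (wed x y) = wed (ip D x) y + msgn (int k + pint q * pint a) *\<^sub>R wed x (ip D y)"
  using superforms derivation unfolding superform_algebra_def sf_interior_def by blast+

lemma interior_zero [simp]: "ip D 0 = 0"
  by (rule linear_0) (rule linearI; simp)

lemma interior_generator:
  "f \<in> B 0 c \<Longrightarrow> g \<in> Alg B \<Longrightarrow> ip D (wed f (dd g)) = msgn (pint q * pint c) *\<^sub>R wed f (D g)"
  using interior_wed[of f 0 c "dd g"] interior_function[of f c] interior_dd_function[of g] by simp

lemma interior_dd_generator: "f \<in> B 0 c \<Longrightarrow> g \<in> Alg B \<Longrightarrow>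
    ip D (dd (wed f (dd g))) = wed (D f) (dd g) + msgn (1 + pint q * pint c) *\<^sub>R wed (dd f) (D g)"
  using dd_wed[of f 0 c "dd g"] interior_wed[of "dd f" 1 c "dd g"] dd_in_B[of f 0 c]
    interior_dd_function[of g] interior_dd_function[of f] function_in_Alg[of f c]
  by simp

end

subsection \<open>Homogeneous 1-forms as sums of generators\<close>

lemma generator_in_B: "f \<in> B 0 c \<Longrightarrow> g \<in> B 0 e \<Longrightarrow> wed f (dd g) \<in> B 1 (c \<noteq> e)"
  using wed_in_B[of f 0 c "dd g" 1 e] dd_in_B[of g 0 e] by simp

inductive generator_sum :: "bool \<Rightarrow> 'w \<Rightarrow> bool" for a where
  zero: "generator_sum a 0"
| step: "f \<in> B 0 c \<Longrightarrow> g \<in> B 0 e \<Longrightarrow> (c \<noteq> e) = a \<Longrightarrow> generator_sum a \<beta>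
    \<Longrightarrow> generator_sum a (wed f (dd g) + \<beta>)"

lemma generator_sum_in_B: "generator_sum a \<alpha> \<Longrightarrow> \<alpha> \<in> B 1 a"
proof (induction rule: generator_sum.induct)
  case (step f c g e \<beta>)
  then show ?case using generator_in_B[OF step(1,2)] add_in_B by simp
qed simp

lemma generator_sum_add: "generator_sum a \<alpha> \<Longrightarrow> generator_sum a \<beta> \<Longrightarrow> generator_sum a (\<alpha> + \<beta>)"
  by (induction rule: generator_sum.induct) (auto simp: add.assoc intro: generator_sum.step)

lemma generator_sum_generator: "f \<in> B 0 c \<Longrightarrow> g \<in> B 0 e \<Longrightarrow> generator_sum (c \<noteq> e) (wed f (dd g))"
  using generator_sum.step[OF _ _ refl generator_sum.zero] by simp

lemma generator_sum_wed_dd: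
  assumes "f \<in> Alg B" and "g \<in> Alg B"
  shows "\<exists>\<alpha>0 \<alpha>1. generator_sum False \<alpha>0 \<and> generator_sum True \<alpha>1 \<and> wed f (dd g) = \<alpha>0 + \<alpha>1"
proof -
  obtain f0 f1 where f: "f0 \<in> B 0 False" "f1 \<in> B 0 True" "f = f0 + f1"
    using assms(1) Alg_decompose by blast
  obtain g0 g1 where g: "g0 \<in> B 0 False" "g1 \<in> B 0 True" "g = g0 + g1"
    using assms(2) Alg_decompose by blast
  let ?\<alpha>0 = "wed f0 (dd g0) + wed f1 (dd g1)"
  let ?\<alpha>1 = "wed f0 (dd g1) + wed f1 (dd g0)"
  have "generator_sum False ?\<alpha>0"
    using generator_sum_add generator_sum_generator[OF f(1) g(1)] generator_sum_generator[OF f(2) g(2)]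
    by simp
  moreover have "generator_sum True ?\<alpha>1"
    using generator_sum_add generator_sum_generator[OF f(1) g(2)] generator_sum_generator[OF f(2) g(1)]
    by simp
  moreover have "wed f (dd g) = ?\<alpha>0 + ?\<alpha>1"
    using f(3) g(3) by (simp add: algebra_simps)
  ultimately show ?thesis by blast
qed

lemma Om1_generator_sums:
  assumes "\<alpha> \<in> Om1 B"
  shows "\<exists>\<alpha>0 \<alpha>1. generator_sum False \<alpha>0 \<and> generator_sum True \<alpha>1 \<and> \<alpha> = \<alpha>0 + \<alpha>1"
proof -
  obtain fs gs where "length fs = length gs" "set fs \<subseteq> Alg B" "set gs \<subseteq> Alg B"
    and \<alpha>: "\<alpha> = (\<Sum>i<length fs. wed (fs ! i) (dd (gs ! i)))"
    using assms superforms unfolding superform_algebra_def sf_generated_def by meson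
  then have Alg: "fs ! i \<in> Alg B \<and> gs ! i \<in> Alg B" if "i < length fs" for i
    using that by (auto dest: nth_mem)
  have "\<exists>\<alpha>0 \<alpha>1. generator_sum False \<alpha>0 \<and> generator_sum True \<alpha>1
      \<and> (\<Sum>i<n. wed (fs ! i) (dd (gs ! i))) = \<alpha>0 + \<alpha>1" if "n \<le> length fs" for n
    using that
  proof (induction n)
    case 0
    then show ?case using generator_sum.zero by fastforce
  next
    case (Suc n)
    then obtain \<alpha>0 \<alpha>1 where IH: "generator_sum False \<alpha>0" "generator_sum True \<alpha>1"
        "(\<Sum>i<n. wed (fs ! i) (dd (gs ! i))) = \<alpha>0 + \<alpha>1"
      by auto
    obtain \<beta>0 \<beta>1 where \<beta>: "generator_sum False \<beta>0" "generator_sum True \<beta>1"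
        "wed (fs ! n) (dd (gs ! n)) = \<beta>0 + \<beta>1"
      using generator_sum_wed_dd Alg Suc.prems by (metis Suc_le_lessD)
    have "(\<Sum>i<Suc n. wed (fs ! i) (dd (gs ! i))) = (\<alpha>0 + \<beta>0) + (\<alpha>1 + \<beta>1)"
      using IH(3) \<beta>(3) by (simp add: algebra_simps)
    then show ?case
      using IH(1,2) \<beta>(1,2) generator_sum_add by blast
  qed
  then show ?thesis using \<alpha> by blast
qed

lemma B1_generator_sum:
  assumes "\<alpha> \<in> B 1 a"
  shows "generator_sum a \<alpha>"
proof -
  obtain \<alpha>a \<alpha>' where \<alpha>a: "generator_sum a \<alpha>a" and \<alpha>': "generator_sum (\<not> a) \<alpha>'"
      and \<alpha>: "\<alpha> = \<alpha>a + \<alpha>'"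
    using Om1_generator_sums[OF one_form_in_Om1[OF assms]] by (cases a) (auto simp: add.commute)
  have "\<alpha>' \<in> B 1 a"
    using diff_in_B[OF assms generator_sum_in_B[OF \<alpha>a]] \<alpha> by simp
  then have "\<alpha>' = 0"
    using bihomogeneous_eq_0 generator_sum_in_B[OF \<alpha>'] by blast
  then show ?thesis
    using \<alpha>a \<alpha> by simp
qed

lemma one_form_induct [consumes 1, case_names zero step]:
  assumes "\<alpha> \<in> B 1 a"
    and "P 0"
    and "\<And>f g c e \<beta>. f \<in> B 0 c \<Longrightarrow> g \<in> B 0 e \<Longrightarrow> (c \<noteq> e) = a \<Longrightarrow> \<beta> \<in> B 1 a \<Longrightarrow> P \<beta>
      \<Longrightarrow> P (wed f (dd g) + \<beta>)"
  shows "P \<alpha>"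
  using B1_generator_sum[OF assms(1)]
proof (induction rule: generator_sum.induct)
  case (step f c g e \<beta>)
  then show ?case using assms(3) generator_sum_in_B by blast
qed (rule assms(2))

lemma bracket_superder: "\<alpha> \<in> B 1 a \<Longrightarrow> superder B wed a (gb \<alpha>)"
  unfolding superder_def
proof (intro conjI allI ballI impI)
  fix b f assume "\<alpha> \<in> B 1 a" "f \<in> B 0 b"
  then show "gb \<alpha> f \<in> B 0 (b \<noteq> a)"
    using bracket_in_B[of \<alpha> 1 a f 0 b] by (cases a; cases b) auto
next
  fix b f g assume "\<alpha> \<in> B 1 a" "f \<in> B 0 b"
  then show "gb \<alpha> (wed f g) = wed (gb \<alpha> f) g + msgn (pint a * pint b) *\<^sub>R wed f (gb \<alpha> g)"
    using bracket_wed_right[of \<alpha> 1 a f 0 b g] by simp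
qed simp_all

lemma interior_derivation_add:
  assumes D1: "superder B wed q D1" and D2: "superder B wed q D2" and D: "superder B wed q D"
    and sum: "\<And>f. f \<in> Alg B \<Longrightarrow> D f = D1 f + D2 f" and "\<alpha> \<in> B 1 a"
  shows "ip D \<alpha> = ip D1 \<alpha> + ip D2 \<alpha> \<and> ip D (dd \<alpha>) = ip D1 (dd \<alpha>) + ip D2 (dd \<alpha>)"
  using \<open>\<alpha> \<in> B 1 a\<close>
proof (induction rule: one_form_induct)
  case zero
  then show ?case using D1 D2 D by simp
next
  case (step f g c e \<beta>)
  have "f \<in> Alg B" "g \<in> Alg B"
    using step(1,2) function_in_Alg by blast+
  then show ?case
    using step.IH D1 D2 D sum interior_generator[OF _ step(1)] interior_dd_generator[OF _ step(1)]
    by (simp add: algebra_simps)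
qed

lemma interior_bracket_add:
  assumes "\<beta> \<in> B 1 b" and "\<beta>' \<in> B 1 b" and "\<alpha> \<in> B 1 a"
  shows "ip (gb (\<beta> + \<beta>')) \<alpha> = ip (gb \<beta>) \<alpha> + ip (gb \<beta>') \<alpha>"
    and "ip (gb (\<beta> + \<beta>')) (dd \<alpha>) = ip (gb \<beta>) (dd \<alpha>) + ip (gb \<beta>') (dd \<alpha>)"
  using interior_derivation_add[OF bracket_superder[OF assms(1)] bracket_superder[OF assms(2)]
      bracket_superder[OF add_in_B[OF assms(1,2)]] _ assms(3)]
  by simp_all

lemma interior_zero_derivation:
  assumes "\<alpha> \<in> B 1 a"
  shows "ip (\<lambda>_. 0) \<alpha> = 0" and "ip (\<lambda>_. 0) (dd \<alpha>) = 0"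
proof -
  have "gb 0 = (\<lambda>_. 0)"
    by (simp add: fun_eq_iff)
  then show "ip (\<lambda>_. 0) \<alpha> = 0" and "ip (\<lambda>_. 0) (dd \<alpha>) = 0"
    using interior_bracket_add[OF zero_in_B zero_in_B assms] by simp_all
qed

lemma bracket_dd_function: "f \<in> B 0 c \<Longrightarrow> g \<in> B 0 e \<Longrightarrow> gb (dd f) g = gb f (dd g)"
  using dd_bracket[of f 0 c g] bracket_functions[of f c g e] by simp

lemma bracket_dd_function_skew:
  "f \<in> B 0 c \<Longrightarrow> g \<in> B 0 e \<Longrightarrow> gb (dd f) g = - (msgn (pint c * pint e) *\<^sub>R gb (dd g) f)"
  using bracket_dd_function[of f c g e] bracket_skew[of f 0 c "dd g" 1 e] dd_in_B[of g 0 e] by simp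

lemma bracket_dd_dd: "f \<in> B 0 c \<Longrightarrow> gb (dd f) (dd g) = dd (gb (dd f) g)"
  using dd_bracket[of "dd f" 1 c g] dd_in_B[of f 0 c] by simp

lemma bracket_wed_function_left:
  assumes f: "f \<in> B 0 c" and \<alpha>: "\<alpha> \<in> B 1 a" and g: "g \<in> B 0 e"
  shows "gb (wed f \<alpha>) g = wed f (gb \<alpha> g)"
proof -
  have "gb (wed f \<alpha>) g = - (msgn (pint (c \<noteq> a) * pint e) *\<^sub>R gb g (wed f \<alpha>))"
    using bracket_skew[OF wed_in_B[OF f \<alpha>] g] by simp
  also have "gb g (wed f \<alpha>) = msgn (pint e * pint c) *\<^sub>R wed f (gb g \<alpha>)"
    using bracket_wed_right[OF g f, of \<alpha>] bracket_functions[OF g f] by simp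
  also have "gb g \<alpha> = - (msgn (pint e * pint a) *\<^sub>R gb \<alpha> g)"
    using bracket_skew[OF g \<alpha>] by simp
  finally show ?thesis
    by (cases a; cases c; cases e) simp_all
qed

subsection \<open>Skew-supersymmetry of the anchor\<close>

lemma anchor_skew_generators:
  assumes f: "f \<in> B 0 c" and g: "g \<in> B 0 e" and h: "h \<in> B 0 u" and k: "k \<in> B 0 v"
  shows "ip (gb (wed h (dd k))) (wed f (dd g))
    = - (msgn (pint (c \<noteq> e) * pint (u \<noteq> v)) *\<^sub>R ip (gb (wed f (dd g))) (wed h (dd k)))"
proof -
  have "ip (gb (wed h (dd k))) (wed f (dd g))
      = msgn (pint (u \<noteq> v) * pint c) *\<^sub>R wed f (gb (wed h (dd k)) g)"
    using interior_generator[OF bracket_superder[OF generator_in_B[OF h k]] f function_in_Alg[OF g]] .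
  also have "gb (wed h (dd k)) g = wed h (gb (dd k) g)"
    using bracket_wed_function_left[OF h dd_function_in_B[OF k] g] by simp
  also have "gb (dd k) g = - (msgn (pint v * pint e) *\<^sub>R gb (dd g) k)"
    using bracket_dd_function_skew[OF k g] .
  also have "wed f (wed h (gb (dd g) k)) = msgn (pint c * pint u) *\<^sub>R wed h (wed f (gb (dd g) k))"
    using wed_commute[OF f h] by (simp add: wed_assoc[symmetric])
  moreover have "ip (gb (wed f (dd g))) (wed h (dd k))
      = msgn (pint (c \<noteq> e) * pint u) *\<^sub>R wed h (wed f (gb (dd g) k))"
    using interior_generator[OF bracket_superder[OF generator_in_B[OF f g]] h function_in_Alg[OF k]]
      bracket_wed_function_left[OF f dd_function_in_B[OF g] k] by simp
  ultimately show ?thesis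
    by (cases c; cases e; cases u; cases v) (simp_all add: algebra_simps)
qed

lemma anchor_skew_generator_right:
  assumes \<alpha>: "\<alpha> \<in> B 1 a" and h: "h \<in> B 0 u" and k: "k \<in> B 0 v"
  shows "ip (gb (wed h (dd k))) \<alpha> = - (msgn (pint a * pint (u \<noteq> v)) *\<^sub>R ip (gb \<alpha>) (wed h (dd k)))"
  using \<alpha>
proof (induction rule: one_form_induct)
  case zero
  then show ?case
    using interior_zero_derivation[OF generator_in_B[OF h k]] bracket_superder[OF generator_in_B[OF h k]]
    by simp
next
  case (step f g c e \<beta>)
  then show ?case
    unfolding interior_bracket_add(1)[OF generator_in_B[OF step(1,2), unfolded step(3)] step(4)
        generator_in_B[OF h k]]
    using anchor_skew_generators[OF step(1,2) h k] bracket_superder[OF generator_in_B[OF h k]]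
    by (simp add: algebra_simps)
qed

lemma anchor_skew:
  assumes \<alpha>: "\<alpha> \<in> B 1 a" and \<beta>: "\<beta> \<in> B 1 b"
  shows "ip (gb \<beta>) \<alpha> = - (msgn (pint a * pint b) *\<^sub>R ip (gb \<alpha>) \<beta>)"
  using \<beta>
proof (induction rule: one_form_induct)
  case zero
  then show ?case
    using interior_zero_derivation[OF \<alpha>] bracket_superder[OF \<alpha>] by simp
next
  case (step h k u v \<beta>)
  then show ?case
    unfolding interior_bracket_add(1)[OF generator_in_B[OF step(1,2), unfolded step(3)] step(4) \<alpha>]
    using anchor_skew_generator_right[OF \<alpha> step(1,2)] bracket_superder[OF \<alpha>]
    by (simp add: algebra_simps)
qed

subsection \<open>The bracket of two 1-forms\<close>

lemma bracket_formula_generators: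
  assumes f: "f \<in> B 0 c" and g: "g \<in> B 0 e" and h: "h \<in> B 0 u" and k: "k \<in> B 0 v"
  defines "\<alpha> \<equiv> wed f (dd g)" and "\<beta> \<equiv> wed h (dd k)"
  shows "gb \<alpha> \<beta> = ip (gb \<alpha>) (dd \<beta>) - msgn (pint (c \<noteq> e) * pint (u \<noteq> v)) *\<^sub>R ip (gb \<beta>) (dd \<alpha>)
    + dd (ip (gb \<alpha>) \<beta>)"
proof -
  have dg: "dd g \<in> B 1 e" and dk: "dd k \<in> B 1 v"
    using dd_function_in_B f g k by blast+
  have \<alpha>B: "\<alpha> \<in> B 1 (c \<noteq> e)" and \<beta>B: "\<beta> \<in> B 1 (u \<noteq> v)"
    unfolding \<alpha>_def \<beta>_def using generator_in_B f g h k by blast+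
  define P Q R where "P = gb (dd g) h" and "Q = gb (dd g) k" and "R = gb (dd k) f"
  have \<alpha>h: "gb \<alpha> h = wed f P" and \<alpha>k: "gb \<alpha> k = wed f Q" and \<beta>f: "gb \<beta> f = wed h R"
    unfolding \<alpha>_def \<beta>_def P_def Q_def R_def
    using bracket_wed_function_left f h dg dk h k f by blast+
  have \<beta>g: "gb \<beta> g = - (msgn (pint v * pint e) *\<^sub>R wed h Q)"
    unfolding \<beta>_def Q_def using bracket_wed_function_left[OF h dk g] bracket_dd_function_skew[OF k g]
    by simp
  have \<alpha>\<beta>: "gb \<alpha> \<beta> = wed (gb \<alpha> h) (dd k) + msgn (pint (c \<noteq> e) * pint u) *\<^sub>R wed h (gb \<alpha> (dd k))"
    unfolding \<beta>_def using bracket_wed_right[OF \<alpha>B h, of "dd k"] by simp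
  have \<alpha>dk: "gb \<alpha> (dd k) = - (msgn (pint (c \<noteq> e) * pint v) *\<^sub>R gb (dd k) \<alpha>)"
    using bracket_skew[OF \<alpha>B dk] by simp
  have dk\<alpha>: "gb (dd k) \<alpha> = wed R (dd g) + msgn (pint v * pint c) *\<^sub>R wed f (gb (dd k) (dd g))"
    unfolding \<alpha>_def R_def using bracket_wed_right[OF dk f, of "dd g"] by simp
  have dkdg: "gb (dd k) (dd g) = - (msgn (pint v * pint e) *\<^sub>R dd Q)"
    unfolding Q_def using bracket_skew[OF dk dg] bracket_dd_dd[OF g, of k] by simp
  have ip\<alpha>d\<beta>: "ip (gb \<alpha>) (dd \<beta>)
      = wed (gb \<alpha> h) (dd k) + msgn (1 + pint (c \<noteq> e) * pint u) *\<^sub>R wed (dd h) (gb \<alpha> k)"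
    unfolding \<beta>_def using interior_dd_generator[OF bracket_superder[OF \<alpha>B] h function_in_Alg[OF k]] .
  have ip\<beta>d\<alpha>: "ip (gb \<beta>) (dd \<alpha>)
      = wed (gb \<beta> f) (dd g) + msgn (1 + pint (u \<noteq> v) * pint c) *\<^sub>R wed (dd f) (gb \<beta> g)"
    unfolding \<alpha>_def using interior_dd_generator[OF bracket_superder[OF \<beta>B] f function_in_Alg[OF g]] .
  have ip\<alpha>\<beta>: "ip (gb \<alpha>) \<beta> = msgn (pint (c \<noteq> e) * pint u) *\<^sub>R wed h (gb \<alpha> k)"
    unfolding \<beta>_def using interior_generator[OF bracket_superder[OF \<alpha>B] h function_in_Alg[OF k]] .
  have d_hfQ: "dd (wed h (wed f Q)) = wed (dd h) (wed f Q) + wed h (wed (dd f) Q + wed f (dd Q))"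
    using dd_wed[OF h, of "wed f Q"] dd_wed[OF f, of Q] by simp
  have df_hQ: "wed (dd f) (wed h Q) = msgn (pint c * pint u) *\<^sub>R wed h (wed (dd f) Q)"
    using wed_commute[OF dd_function_in_B[OF f] h] by (simp add: wed_assoc[symmetric])
  show ?thesis
    unfolding \<alpha>\<beta> \<alpha>dk dk\<alpha> dkdg ip\<alpha>d\<beta> ip\<beta>d\<alpha> ip\<alpha>\<beta> \<alpha>h \<alpha>k \<beta>f \<beta>g
    using d_hfQ df_hQ
    by (cases c; cases e; cases u; cases v) (simp_all add: algebra_simps wed_assoc)
qed

lemma bracket_formula_generator_right:
  assumes \<alpha>: "\<alpha> \<in> B 1 a" and h: "h \<in> B 0 u" and k: "k \<in> B 0 v"
  defines "\<beta> \<equiv> wed h (dd k)"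
  shows "gb \<alpha> \<beta> = ip (gb \<alpha>) (dd \<beta>) - msgn (pint a * pint (u \<noteq> v)) *\<^sub>R ip (gb \<beta>) (dd \<alpha>)
    + dd (ip (gb \<alpha>) \<beta>)"
  using \<alpha>
proof (induction rule: one_form_induct)
  case zero
  have "\<beta> \<in> B 1 (u \<noteq> v)"
    unfolding \<beta>_def using generator_in_B[OF h k] .
  then show ?case
    using interior_zero_derivation bracket_superder[OF \<open>\<beta> \<in> B 1 (u \<noteq> v)\<close>] by simp
next
  case (step f g c e \<alpha>)
  have \<beta>B: "\<beta> \<in> B 1 (u \<noteq> v)"
    unfolding \<beta>_def using generator_in_B[OF h k] .
  have fgB: "wed f (dd g) \<in> B 1 a"
    using generator_in_B[OF step(1,2)] step(3) by simp
  show ?case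
    unfolding interior_bracket_add[OF fgB step(4) \<beta>B]
    unfolding bracket_add_left step.IH
      bracket_formula_generators[OF step(1,2) h k, folded \<beta>_def, unfolded step(3)]
    using bracket_superder[OF \<beta>B]
    by (simp add: algebra_simps)
qed

lemma bracket_formula:
  assumes \<alpha>: "\<alpha> \<in> B 1 a" and \<beta>: "\<beta> \<in> B 1 b"
  shows "gb \<alpha> \<beta> = ip (gb \<alpha>) (dd \<beta>) - msgn (pint a * pint b) *\<^sub>R ip (gb \<beta>) (dd \<alpha>)
    + dd (ip (gb \<alpha>) \<beta>)"
  using \<beta>
proof (induction rule: one_form_induct)
  case zero
  then show ?case
    using interior_zero_derivation[OF \<alpha>] bracket_superder[OF \<alpha>] by simp
next
  case (step h k u v \<beta>)
  show ?case
    unfolding interior_bracket_add[OF generator_in_B[OF step(1,2), unfolded step(3)] step(4) \<alpha>]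
    unfolding bracket_add_right step.IH bracket_formula_generator_right[OF \<alpha> step(1,2), unfolded step(3)]
    using bracket_superder[OF \<alpha>]
    by (simp add: algebra_simps)
qed

subsection \<open>The Lie superalgebroid\<close>

lemma bracket_wed_left_Alg:
  assumes "f \<in> Alg B" and "\<alpha> \<in> Om1 B" and "g \<in> Alg B"
  shows "gb (wed f \<alpha>) g = wed f (gb \<alpha> g)"
proof -
  obtain g0 g1 where g: "g0 \<in> B 0 False" "g1 \<in> B 0 True" "g = g0 + g1"
    using assms(3) Alg_decompose by blast
  have homogeneous: "gb (wed f' \<alpha>') g = wed f' (gb \<alpha>' g)" if "f' \<in> B 0 c" "\<alpha>' \<in> B 1 a" for f' \<alpha>' c a
    using bracket_wed_function_left[OF that g(1)] bracket_wed_function_left[OF that g(2)] g(3) by simp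
  obtain f0 f1 where "f0 \<in> B 0 False" "f1 \<in> B 0 True" "f = f0 + f1"
    using assms(1) Alg_decompose by blast
  moreover obtain \<alpha>0 \<alpha>1 where "\<alpha>0 \<in> B 1 False" "\<alpha>1 \<in> B 1 True" "\<alpha> = \<alpha>0 + \<alpha>1"
    using assms(2) Om1_decompose by blast
  ultimately show ?thesis
    using homogeneous by simp
qed

lemma bracket_dd_dd_Alg:
  assumes "f \<in> Alg B"
  shows "gb (dd f) (dd g) = dd (gb (dd f) g)"
proof -
  obtain f0 f1 where "f0 \<in> B 0 False" "f1 \<in> B 0 True" "f = f0 + f1"
    using assms Alg_decompose by blast
  then show ?thesis
    using bracket_dd_dd[of f0 False g] bracket_dd_dd[of f1 True g] by simp
qed

lemma bracket_Om1_closed: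
  assumes "\<alpha> \<in> Om1 B" and "\<beta> \<in> Om1 B"
  shows "gb \<alpha> \<beta> \<in> Om1 B"
proof -
  obtain \<alpha>0 \<alpha>1 where \<alpha>: "\<alpha>0 \<in> B 1 False" "\<alpha>1 \<in> B 1 True" "\<alpha> = \<alpha>0 + \<alpha>1"
    using assms(1) Om1_decompose by blast
  obtain \<beta>0 \<beta>1 where \<beta>: "\<beta>0 \<in> B 1 False" "\<beta>1 \<in> B 1 True" "\<beta> = \<beta>0 + \<beta>1"
    using assms(2) Om1_decompose by blast
  have "gb \<alpha>0 \<beta>0 + gb \<alpha>1 \<beta>1 \<in> B 1 False" and "gb \<alpha>0 \<beta>1 + gb \<alpha>1 \<beta>0 \<in> B 1 True"
    using bracket_in_B \<alpha> \<beta> by (intro add_in_B; fastforce)+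
  moreover have "gb \<alpha> \<beta> = (gb \<alpha>0 \<beta>0 + gb \<alpha>1 \<beta>1) + (gb \<alpha>0 \<beta>1 + gb \<alpha>1 \<beta>0)"
    using \<alpha>(3) \<beta>(3) by (simp add: algebra_simps)
  ultimately show ?thesis
    unfolding Om1_def by blast
qed

lemma lie_superalgebroid_bracket: "lie_superalgebroid B wed (anchor gb) gb"
  unfolding lie_superalgebroid_def anchor_eq
proof (intro conjI ballI allI impI)
  fix a b \<alpha> \<beta> assume "\<alpha> \<in> B 1 a" "\<beta> \<in> B 1 b"
  then show "gb \<alpha> \<beta> \<in> B 1 (a \<noteq> b)"
    and "gb \<alpha> \<beta> = - (msgn (pint a * pint b) *\<^sub>R gb \<beta> \<alpha>)"
    and "\<And>c \<gamma>. \<gamma> \<in> B 1 c \<Longrightarrow> gb \<alpha> (gb \<beta> \<gamma>) = gb (gb \<alpha> \<beta>) \<gamma> + msgn (pint a * pint b) *\<^sub>R gb \<beta> (gb \<alpha> \<gamma>)"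
    using bracket_in_B[of \<alpha> 1 a \<beta> 1 b] bracket_skew[of \<alpha> 1 a \<beta> 1 b] bracket_jacobi[of \<alpha> 1 a \<beta> 1 b]
    by simp_all
next
  fix a c \<alpha> f \<beta> assume "\<alpha> \<in> B 1 a" "f \<in> B 0 c"
  then show "gb \<alpha> (wed f \<beta>) = wed (gb \<alpha> f) \<beta> + msgn (pint a * pint c) *\<^sub>R wed f (gb \<alpha> \<beta>)"
    using bracket_wed_right[of \<alpha> 1 a f 0 c \<beta>] by simp
next
  fix \<alpha> \<beta> assume "\<alpha> \<in> Om1 B" "\<beta> \<in> Om1 B"
  then show "gb \<alpha> \<beta> \<in> Om1 B" by (rule bracket_Om1_closed)
next
  fix a \<alpha> assume "\<alpha> \<in> B 1 a"
  then show "superder B wed a (gb \<alpha>)" by (rule bracket_superder)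
next
  fix f \<alpha> g assume "f \<in> Alg B" "\<alpha> \<in> Om1 B" "g \<in> Alg B"
  then show "gb (wed f \<alpha>) g = wed f (gb \<alpha> g)" by (rule bracket_wed_left_Alg)
qed simp_all

lemma skew_anchor_bracket: "skew_anchor B ip (anchor gb)"
  unfolding skew_anchor_def anchor_eq using anchor_skew by blast

lemma poisson_type_bracket: "poisson_type B wed dd ip (anchor gb) gb"
  unfolding poisson_type_def
proof (intro conjI lie_superalgebroid_bracket skew_anchor_bracket allI impI)
  fix a b c f g h assume f: "f \<in> B 0 a" and g: "g \<in> B 0 b" and h: "h \<in> B 0 c"
  have "gb (dd f) (gb (dd g) h)
      = gb (gb (dd f) (dd g)) h + msgn (pint a * pint b) *\<^sub>R gb (dd g) (gb (dd f) h)"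
    using bracket_jacobi[OF dd_function_in_B[OF f] dd_function_in_B[OF g] h] by simp
  then show "anchor gb (dd f) (anchor gb (dd g) h) = anchor gb (dd (anchor gb (dd f) g)) h
      + msgn (pint a * pint b) *\<^sub>R anchor gb (dd g) (anchor gb (dd f) h)"
    unfolding anchor_eq bracket_dd_dd[OF f] .
qed

end

theorem mainTheorem7:
  fixes B :: "nat \<Rightarrow> bool \<Rightarrow> 'w::real_vector set"
    and wed gb :: "'w \<Rightarrow> 'w \<Rightarrow> 'w" and one :: 'w and dd :: "'w \<Rightarrow> 'w"
    and ip :: "('w \<Rightarrow> 'w) \<Rightarrow> 'w \<Rightarrow> 'w"
  assumes "superform_algebra B wed one dd ip"
    and "gerstenhaber B wed gb"
    and "differential_bracket B dd gb"
  shows "skew_anchor B ip (anchor gb)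
    \<and> (\<forall>f\<in>Alg B. \<forall>g\<in>Alg B. gb (dd f) (dd g) = dd (anchor gb (dd f) g))
    \<and> (\<forall>a b \<alpha> \<beta>. \<alpha> \<in> B 1 a \<longrightarrow> \<beta> \<in> B 1 b \<longrightarrow>
         gb \<alpha> \<beta> = ip (anchor gb \<alpha>) (dd \<beta>)
                   - msgn (pint a * pint b) *\<^sub>R ip (anchor gb \<beta>) (dd \<alpha>)
                   + dd (ip (anchor gb \<alpha>) \<beta>))
    \<and> poisson_type B wed dd ip (anchor gb) gb"
proof -
  interpret differential_gerstenhaber B wed gb one dd ip
    using assms by unfold_locales
  show ?thesis
    using skew_anchor_bracket bracket_dd_dd_Alg bracket_formula poisson_type_bracket
    by (simp add: anchor_eq)
qed

end
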